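(* Let $\mathbf a=\{a_k\}_{k\ge0}$ with $\operatorname{Im}a_k>0$ have no limit points on the real axis $\mathbb R$, satisfy $\lim_{n\to\infty}\sigma_n=+\infty$, and satisfy $\varsigma_n/\sigma_n\le C$ for all $n\ge1$ with a constant $C$. Then for every $\varphi\in L_1(0,\infty)$ and every $x\in\mathbb R$, $$\lim_{n\to\infty}\int_0^\infty\varphi(y)\sin\big(y\,\mu_n(y;x)\big)\,dy=0\quad\text{and}\quad\lim_{n\to\infty}\int_0^\infty\varphi(y)\sin\big(y\,\mu_n(-y;x)\big)\,dy=0.$$
   Context: For $y\ne0$, $x\in\mathbb R$: $\mu_n(y;x):=\frac1y\int_x^{x+y}\sum_{k=0}^{n-1}\frac{2\operatorname{Im}a_k}{(u-\operatorname{Re}a_k)^2+(\operatorname{Im}a_k)^2}\,du$. $\sigma_n:=\sum_{k=0}^{n-1}\frac{|\operatorname{Im}a_k|}{1+|a_k|^2}$, $\varsigma_n:=\sum_{k=0}^{n-1}\frac{1}{(\operatorname{Im}a_k)^2}$. "No limit points on $\mathbb R$" means no subsequence of $\{a_k\}$ converges to a real number. *)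

theory Defs
  imports "HOL-Analysis.Analysis"
begin

definition mu_seq :: "(nat \<Rightarrow> complex) \<Rightarrow> nat \<Rightarrow> real \<Rightarrow> real \<Rightarrow> real" where
  "mu_seq a n y x = (1 / y) * (LBINT u=x..x+y.
      (\<Sum>k<n. 2 * Im (a k) / ((u - Re (a k))\<^sup>2 + (Im (a k))\<^sup>2)))"

definition sigma_seq :: "(nat \<Rightarrow> complex) \<Rightarrow> nat \<Rightarrow> real" where
  "sigma_seq a n = (\<Sum>k<n. \<bar>Im (a k)\<bar> / (1 + (cmod (a k))\<^sup>2))"

definition varsigma_seq :: "(nat \<Rightarrow> complex) \<Rightarrow> nat \<Rightarrow> real" where
  "varsigma_seq a n = (\<Sum>k<n. 1 / (Im (a k))\<^sup>2)"

definition no_real_limit_points :: "(nat \<Rightarrow> complex) \<Rightarrow> bool" where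
  "no_real_limit_points a \<longleftrightarrow>
     \<not> (\<exists>r :: nat \<Rightarrow> nat. \<exists>t :: real. strict_mono r \<and> (a \<circ> r) \<longlonglongrightarrow> complex_of_real t)"

end

theory Submission imports Defs begin

(*
  For y > 0 the quantity y * mu_n(+-y; x) is the phase +-(Phi_n(x +- y) - Phi_n(x)), where
  Phi_n(u) = sum_k 2 arctan((u - Re a_k) / Im a_k) has as derivative the Poisson sum
  sum_k 2 Im a_k / ((u - Re a_k)^2 + (Im a_k)^2). On a compact interval this derivative is at
  least sigma_n / (M^2 + 1), while the second derivative is bounded by 2 varsigma_n <= 2 C sigma_n.
  One integration by parts therefore bounds the integral of the sine of the phase over the
  interval by O(1 / sigma_n), which tends to 0. Since the kernels are bounded by 1, this extends
  from indicators of intervals to all integrable phi: first to bounded Borel sets by induction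
  over the Borel sigma-algebra, then to sets of finite measure and to L1 by dominated convergence.
*)

locale bounded_kernel =
  fixes \<psi> :: "nat \<Rightarrow> real \<Rightarrow> real"
  assumes measurable_kernel[measurable]: "\<And>n. \<psi> n \<in> borel_measurable borel"
    and abs_kernel_le_1: "\<And>n y. \<bar>\<psi> n y\<bar> \<le> 1"
    and interval_integral_kernel_tendsto_0: "\<And>c d. (\<lambda>n. LBINT y:{c..d}. \<psi> n y) \<longlonglongrightarrow> 0"
begin

definition annihilates :: "(real \<Rightarrow> real) \<Rightarrow> bool" where
  "annihilates F \<longleftrightarrow> (\<lambda>n. LINT y|lborel. F y * \<psi> n y) \<longlonglongrightarrow> 0"

lemma integrable_mult_kernel:
  assumes "integrable lborel F"
  shows "integrable lborel (\<lambda>y. F y * \<psi> n y)"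
proof (rule Bochner_Integration.integrable_bound[OF assms])
  show "(\<lambda>y. F y * \<psi> n y) \<in> borel_measurable lborel"
    using assms by measurable
  show "AE y in lborel. norm (F y * \<psi> n y) \<le> norm (F y)"
    using abs_kernel_le_1[of n] by (auto intro!: mult_left_le simp: abs_mult)
qed

lemma abs_integral_mult_kernel_le:
  assumes "integrable lborel F"
  shows "\<bar>LINT y|lborel. F y * \<psi> n y\<bar> \<le> (LINT y|lborel. \<bar>F y\<bar>)"
proof -
  have "\<bar>LINT y|lborel. F y * \<psi> n y\<bar> \<le> (LINT y|lborel. \<bar>F y * \<psi> n y\<bar>)"
    by (rule integral_abs_bound)
  also have "\<dots> \<le> (LINT y|lborel. \<bar>F y\<bar>)"
    using assms integrable_abs[OF integrable_mult_kernel[OF assms, of n]] abs_kernel_le_1[of n]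
    by (intro integral_mono) (auto intro!: mult_left_le simp: abs_mult)
  finally show ?thesis .
qed

lemma annihilates_add:
  assumes "integrable lborel F" "integrable lborel G" "annihilates F" "annihilates G"
  shows "annihilates (\<lambda>y. F y + G y)"
  using tendsto_add[OF assms(3,4)[unfolded annihilates_def]]
    integrable_mult_kernel[OF assms(1)] integrable_mult_kernel[OF assms(2)]
  by (simp add: annihilates_def distrib_right)

lemma annihilates_diff:
  assumes "integrable lborel F" "integrable lborel G" "annihilates F" "annihilates G"
  shows "annihilates (\<lambda>y. F y - G y)"
  using tendsto_diff[OF assms(3,4)[unfolded annihilates_def]]
    integrable_mult_kernel[OF assms(1)] integrable_mult_kernel[OF assms(2)]
  by (simp add: annihilates_def left_diff_distrib)

lemma annihilates_mult_const:
  assumes "annihilates F"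
  shows "annihilates (\<lambda>y. F y * c)"
  using tendsto_mult_left[OF assms[unfolded annihilates_def], of c]
  by (simp add: annihilates_def mult_ac)

lemma annihilates_zero: "annihilates (\<lambda>y. 0)"
  by (simp add: annihilates_def)

lemma annihilates_interval: "annihilates (indicator {c..d})"
  using interval_integral_kernel_tendsto_0[of c d]
  by (simp add: annihilates_def set_lebesgue_integral_def)

lemma annihilates_dominated_limit:
  assumes F: "integrable lborel F"
    and G: "\<And>i. integrable lborel (G i)" "\<And>i. annihilates (G i)"
    and lim: "\<And>y. (\<lambda>i. G i y) \<longlonglongrightarrow> F y"
    and w: "integrable lborel w" "\<And>i y. \<bar>G i y\<bar> \<le> w y"
  shows "annihilates F"
proof -
  have "(\<lambda>i. \<bar>F y - G i y\<bar>) \<longlonglongrightarrow> 0" for y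
    using tendsto_rabs[OF tendsto_diff[OF tendsto_const[of "F y"] lim[of y]]] by simp
  then have pointwise: "AE y in lborel. (\<lambda>i. \<bar>F y - G i y\<bar>) \<longlonglongrightarrow> 0"
    by simp
  have "\<bar>F y - G i y\<bar> \<le> \<bar>F y\<bar> + w y" for i y
    using abs_triangle_ineq4[of "F y" "G i y"] w(2)[of i y] by linarith
  then have dominated: "AE y in lborel. norm \<bar>F y - G i y\<bar> \<le> \<bar>F y\<bar> + w y" for i
    by simp
  have "integrable lborel (\<lambda>y. \<bar>F y\<bar> + w y)"
    using F w(1) by simp
  from integral_dominated_convergence[OF _ _ this pointwise dominated]
  have L1: "(\<lambda>i. LINT y|lborel. \<bar>F y - G i y\<bar>) \<longlonglongrightarrow> 0"
    using F G(1) by simp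
  show ?thesis
    unfolding annihilates_def tendsto_iff
  proof (intro allI impI)
    fix e :: real assume e: "e > 0"
    then obtain i where i: "(LINT y|lborel. \<bar>F y - G i y\<bar>) < e / 2"
      using L1[unfolded LIMSEQ_iff, rule_format, of "e / 2"] by auto
    have "\<forall>\<^sub>F n in sequentially. dist (LINT y|lborel. G i y * \<psi> n y) 0 < e / 2"
      using G(2)[of i, unfolded annihilates_def tendsto_iff, rule_format, of "e / 2"] e by simp
    then show "\<forall>\<^sub>F n in sequentially. dist (LINT y|lborel. F y * \<psi> n y) 0 < e"
    proof eventually_elim
      case (elim n)
      have "(LINT y|lborel. F y * \<psi> n y)
          = (LINT y|lborel. (F y - G i y) * \<psi> n y) + (LINT y|lborel. G i y * \<psi> n y)"
        using integrable_mult_kernel[OF F] integrable_mult_kernel[OF G(1)]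
        by (simp add: left_diff_distrib)
      moreover have "\<bar>LINT y|lborel. (F y - G i y) * \<psi> n y\<bar> < e / 2"
        using abs_integral_mult_kernel_le[of "\<lambda>y. F y - G i y" n] F G(1) i by simp
      ultimately show ?case
        using elim by (simp add: dist_real_def)
    qed
  qed
qed

lemma integrable_indicator_bounded:
  assumes "A \<in> sets borel"
  shows "integrable lborel (indicator (A \<inter> {-R..R}) :: real \<Rightarrow> real)"
proof -
  have "emeasure lborel (A \<inter> {-R..R}) \<le> emeasure lborel {-R..R}"
    by (rule emeasure_mono) auto
  also have "\<dots> < \<infinity>"
    by (simp add: emeasure_lborel_Icc_eq)
  finally show ?thesis
    using assms by (simp add: integrable_indicator_iff)
qed

lemma integrable_interval: "integrable lborel (indicator {c..d} :: real \<Rightarrow> real)"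
  by (simp add: integrable_indicator_iff emeasure_lborel_Icc_eq)

(* Truncating to {-R..R} keeps the complement step of the induction inside L1. *)

lemma annihilates_indicator_bounded:
  assumes "A \<in> sets borel"
  shows "annihilates (indicator (A \<inter> {-R..R}))"
  using assms
proof (induction rule: borel_set_induct)
  case empty
  show ?case
    using annihilates_zero by simp
next
  case (interval a b)
  have "{a..b} \<inter> {-R..R} = {max a (-R)..min b R}"
    by auto
  then show ?case
    by (simp add: annihilates_interval)
next
  case (compl A)
  have "indicator (- A \<inter> {-R..R}) = (\<lambda>y. indicator {-R..R} y - indicator (A \<inter> {-R..R}) y :: real)"
    by (auto simp: indicator_def)
  then show ?case
    using annihilates_diff[OF integrable_interval integrable_indicator_bounded[OF compl.hyps]
        annihilates_interval compl.IH]
    by simp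
next
  case (union A)
  define G where "G N = (indicator ((\<Union>i<N. A i) \<inter> {-R..R}) :: real \<Rightarrow> real)" for N
  have G_integrable: "integrable lborel (G N)" for N
    unfolding G_def using union.hyps(2) by (intro integrable_indicator_bounded) auto
  have G_annihilates: "annihilates (G N)" for N
  proof (induction N)
    case 0
    show ?case
      using annihilates_zero by (simp add: G_def)
  next
    case (Suc N)
    have "A N \<inter> A i = {}" if "i < N" for i
      using union.hyps(1) that by (simp add: disjoint_family_on_def)
    then have "A N \<inter> (\<Union>i<N. A i) = {}"
      by blast
    then have "G (Suc N) = (\<lambda>y. G N y + indicator (A N \<inter> {-R..R}) y)"
      by (auto simp: G_def indicator_def lessThan_Suc fun_eq_iff)
    then show ?case
      using annihilates_add[OF G_integrable integrable_indicator_bounded Suc union.IH]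
        union.hyps(2) by simp
  qed
  have G_tendsto: "(\<lambda>N. G N y) \<longlonglongrightarrow> indicator ((\<Union>i. A i) \<inter> {-R..R}) y" for y
  proof (cases "y \<in> (\<Union>i. A i)")
    case True
    then obtain j where j: "y \<in> A j" by auto
    have "\<forall>\<^sub>F N in sequentially. G N y = indicator ((\<Union>i. A i) \<inter> {-R..R}) y"
      using eventually_gt_at_top[of j] by eventually_elim (use j in \<open>auto simp: G_def indicator_def\<close>)
    then show ?thesis by (rule tendsto_eventually)
  next
    case False
    then show ?thesis by (simp add: G_def indicator_def)
  qed
  have G_bounded: "\<bar>G N y\<bar> \<le> indicator {-R..R} y" for N y
    by (auto simp: G_def indicator_def)
  have "(\<Union>i. A i) \<in> sets borel"
    using union.hyps(2) by auto
  from annihilates_dominated_limit[OF integrable_indicator_bounded[OF this]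
      G_integrable G_annihilates G_tendsto integrable_interval G_bounded]
  show ?case .
qed

lemma annihilates_indicator:
  assumes A: "A \<in> sets borel" and "emeasure lborel A < \<infinity>"
  shows "annihilates (indicator A)"
proof (rule annihilates_dominated_limit)
  show "integrable lborel (indicator A :: real \<Rightarrow> real)"
    using assms by (simp add: integrable_indicator_iff)
  show "(\<lambda>m. indicator (A \<inter> {-real m..real m}) y) \<longlonglongrightarrow> (indicator A y :: real)" for y
  proof -
    obtain j :: nat where j: "\<bar>y\<bar> \<le> real j"
      using real_arch_simple by blast
    have "\<forall>\<^sub>F m in sequentially. indicator (A \<inter> {-real m..real m}) y = (indicator A y :: real)"
      using eventually_ge_at_top[of j] by eventually_elim (use j in \<open>auto simp: indicator_def\<close>)
    then show ?thesis by (rule tendsto_eventually)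
  qed
  show "\<bar>indicator (A \<inter> {-real m..real m}) y\<bar> \<le> (indicator A y :: real)" for m y
    by (auto simp: indicator_def)
qed (use assms integrable_indicator_bounded annihilates_indicator_bounded in
    \<open>auto simp: integrable_indicator_iff\<close>)

theorem integral_mult_kernel_tendsto_0:
  assumes "integrable lborel F"
  shows "(\<lambda>n. LINT y|lborel. F y * \<psi> n y) \<longlonglongrightarrow> 0"
  unfolding annihilates_def[symmetric]
  using assms
proof (induction rule: integrable_induct)
  case (base A c)
  then show ?case
    using annihilates_mult_const[OF annihilates_indicator] by simp
next
  case (add f g)
  then show ?case
    by (simp add: annihilates_add)
next
  case (lim f s)
  show ?case
  proof (rule annihilates_dominated_limit[where G=s and w="\<lambda>y. 2 * \<bar>f y\<bar>"])
    show "\<bar>s i y\<bar> \<le> 2 * \<bar>f y\<bar>" for i y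
      using lim by (metis UNIV_I real_norm_def space_borel space_lborel)
  qed (use lim in auto)
qed

end

lemma integral_sin_by_parts:
  fixes g g' g'' :: "real \<Rightarrow> real"
  assumes "c \<le> d"
    and g: "\<And>y. (g has_real_derivative g' y) (at y)"
    and g': "\<And>y. (g' has_real_derivative g'' y) (at y)"
    and g''_cont: "continuous_on {c..d} g''"
    and g'_nonzero: "\<And>y. y \<in> {c..d} \<Longrightarrow> g' y \<noteq> 0"
  shows "integral {c..d} (\<lambda>y. sin (g y))
    = cos (g c) / g' c - cos (g d) / g' d - integral {c..d} (\<lambda>y. cos (g y) * g'' y / (g' y)\<^sup>2)"
proof -
  define F where "F y = - cos (g y) / g' y" for y
  define r where "r y = cos (g y) * g'' y / (g' y)\<^sup>2" for y
  have "(F has_vector_derivative (sin (g y) + r y)) (at y within {c..d})" if "y \<in> {c..d}" for y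
  proof -
    have "(F has_real_derivative (sin (g y) + r y)) (at y)"
      unfolding F_def[abs_def]
      by (rule DERIV_cong[OF DERIV_divide[OF DERIV_minus[OF DERIV_chain2[OF DERIV_cos g]] g']])
        (use g'_nonzero[OF that] in \<open>auto simp: r_def field_simps power2_eq_square\<close>)
    then show ?thesis
      by (simp add: has_real_derivative_iff_has_vector_derivative has_vector_derivative_at_within)
  qed
  then have F: "((\<lambda>y. sin (g y) + r y) has_integral F d - F c) {c..d}"
    by (rule fundamental_theorem_of_calculus[OF \<open>c \<le> d\<close>])
  have "continuous_on {c..d} g" "continuous_on {c..d} g'"
    using g g' by (auto intro!: continuous_at_imp_continuous_on DERIV_isCont)
  then have "continuous_on {c..d} r"
    unfolding r_def[abs_def] using g'_nonzero by (intro continuous_intros g''_cont) auto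
  then have r: "(r has_integral integral {c..d} r) {c..d}"
    by (intro integrable_integral integrable_continuous_real)
  have "((\<lambda>y. sin (g y)) has_integral (F d - F c) - integral {c..d} r) {c..d}"
    using has_integral_diff[OF F r] by simp
  then show ?thesis
    by (simp add: integral_unique F_def r_def[abs_def])
qed

lemma abs_integral_sin_le:
  fixes g g' g'' :: "real \<Rightarrow> real"
  assumes "c \<le> d"
    and g: "\<And>y. (g has_real_derivative g' y) (at y)"
    and g': "\<And>y. (g' has_real_derivative g'' y) (at y)"
    and g''_cont: "continuous_on {c..d} g''"
    and L: "L > 0" "\<And>y. y \<in> {c..d} \<Longrightarrow> L \<le> g' y"
    and B: "\<And>y. y \<in> {c..d} \<Longrightarrow> \<bar>g'' y\<bar> \<le> B"
  shows "\<bar>integral {c..d} (\<lambda>y. sin (g y))\<bar> \<le> 2 / L + B / L\<^sup>2 * (d - c)"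
proof -
  have g'_pos: "g' y > 0" if "y \<in> {c..d}" for y
    using L that by fastforce
  then have g'_nonzero: "g' y \<noteq> 0" if "y \<in> {c..d}" for y
    using that by fastforce
  have boundary: "\<bar>cos (g y) / g' y\<bar> \<le> 1 / L" if "y \<in> {c..d}" for y
  proof -
    have "\<bar>cos (g y) / g' y\<bar> = \<bar>cos (g y)\<bar> / g' y"
      using g'_pos[OF that] by (simp add: abs_divide)
    also have "\<dots> \<le> 1 / L"
      using L(1) L(2)[OF that] by (intro frac_le) auto
    finally show ?thesis .
  qed
  have remainder_le: "norm (cos (g y) * g'' y / (g' y)\<^sup>2) \<le> B / L\<^sup>2" if "y \<in> {c..d}" for y
  proof -
    have "norm (cos (g y) * g'' y / (g' y)\<^sup>2) = \<bar>cos (g y) * g'' y\<bar> / (g' y)\<^sup>2"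
      by (simp add: abs_divide)
    also have "\<dots> \<le> B / L\<^sup>2"
    proof (rule frac_le)
      show "0 \<le> B"
        using B[OF that] by linarith
      show "\<bar>cos (g y) * g'' y\<bar> \<le> B"
        using mult_left_le_one_le[OF abs_ge_zero abs_ge_zero abs_cos_le_one, of "g y" "g'' y"] B[OF that]
        by (simp add: abs_mult)
      show "0 < L\<^sup>2"
        using L(1) by simp
      show "L\<^sup>2 \<le> (g' y)\<^sup>2"
        using L(1) L(2)[OF that] by (intro power_mono) auto
    qed
    finally show ?thesis .
  qed
  have "continuous_on {c..d} g" "continuous_on {c..d} g'"
    using g g' by (auto intro!: continuous_at_imp_continuous_on DERIV_isCont)
  then have "continuous_on {c..d} (\<lambda>y. cos (g y) * g'' y / (g' y)\<^sup>2)"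
    using g'_nonzero by (intro continuous_intros g''_cont) auto
  from integral_bound[OF \<open>c \<le> d\<close> this remainder_le]
  have remainder: "\<bar>integral {c..d} (\<lambda>y. cos (g y) * g'' y / (g' y)\<^sup>2)\<bar> \<le> B / L\<^sup>2 * (d - c)"
    by simp
  have "integral {c..d} (\<lambda>y. sin (g y))
      = cos (g c) / g' c - cos (g d) / g' d - integral {c..d} (\<lambda>y. cos (g y) * g'' y / (g' y)\<^sup>2)"
    by (rule integral_sin_by_parts[OF \<open>c \<le> d\<close> g g' g''_cont g'_nonzero])
  moreover have "\<bar>cos (g c) / g' c\<bar> \<le> 1 / L" "\<bar>cos (g d) / g' d\<bar> \<le> 1 / L"
    using boundary \<open>c \<le> d\<close> by auto
  ultimately show ?thesis
    using remainder by linarith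
qed

lemma integral_sin_tendsto_0:
  fixes g g' g'' :: "nat \<Rightarrow> real \<Rightarrow> real" and L B :: "nat \<Rightarrow> real"
  assumes g: "\<And>n y. (g n has_real_derivative g' n y) (at y)"
    and g': "\<And>n y. (g' n has_real_derivative g'' n y) (at y)"
    and g''_cont: "\<And>n. continuous_on {c..d} (g'' n)"
    and lower: "\<And>n y. y \<in> {c..d} \<Longrightarrow> L n \<le> g' n y"
    and upper: "\<And>n y. y \<in> {c..d} \<Longrightarrow> \<bar>g'' n y\<bar> \<le> B n"
    and L: "filterlim L at_top sequentially"
    and B: "(\<lambda>n. B n / (L n)\<^sup>2) \<longlonglongrightarrow> 0"
  shows "(\<lambda>n. integral {c..d} (\<lambda>y. sin (g n y))) \<longlonglongrightarrow> 0"
proof (cases "c \<le> d")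
  case True
  have "\<forall>\<^sub>F n in sequentially. L n > 0"
    using L by (simp add: filterlim_at_top_dense)
  then have "\<forall>\<^sub>F n in sequentially.
      norm (integral {c..d} (\<lambda>y. sin (g n y))) \<le> 2 / L n + B n / (L n)\<^sup>2 * (d - c)"
  proof eventually_elim
    case (elim n)
    show ?case
      using abs_integral_sin_le[OF True g[of n] g'[of n] g''_cont[of n] elim lower[where n=n] upper[where n=n]]
      by simp
  qed
  moreover have "(\<lambda>n. 2 / L n + B n / (L n)\<^sup>2 * (d - c)) \<longlonglongrightarrow> 0"
    using tendsto_divide_0[OF tendsto_const filterlim_at_top_imp_at_infinity[OF L]]
      tendsto_mult_left_zero[OF B] by (rule tendsto_add_zero)
  ultimately show ?thesis
    by (rule Lim_null_comparison)
qed simp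

definition arctan_sum :: "(nat \<Rightarrow> complex) \<Rightarrow> nat \<Rightarrow> real \<Rightarrow> real" where
  "arctan_sum a n u = (\<Sum>k<n. 2 * arctan ((u - Re (a k)) / Im (a k)))"

definition poisson_sum :: "(nat \<Rightarrow> complex) \<Rightarrow> nat \<Rightarrow> real \<Rightarrow> real" where
  "poisson_sum a n u = (\<Sum>k<n. 2 * Im (a k) / ((u - Re (a k))\<^sup>2 + (Im (a k))\<^sup>2))"

definition poisson_sum_deriv :: "(nat \<Rightarrow> complex) \<Rightarrow> nat \<Rightarrow> real \<Rightarrow> real" where
  "poisson_sum_deriv a n u =
    (\<Sum>k<n. - 4 * Im (a k) * (u - Re (a k)) / ((u - Re (a k))\<^sup>2 + (Im (a k))\<^sup>2)\<^sup>2)"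

lemma has_real_derivative_arctan_sum:
  assumes "\<And>k. Im (a k) > 0"
  shows "(arctan_sum a n has_real_derivative poisson_sum a n u) (at u)"
proof -
  have "((\<lambda>u. 2 * arctan ((u - Re (a k)) / Im (a k))) has_real_derivative
      2 * Im (a k) / ((u - Re (a k))\<^sup>2 + (Im (a k))\<^sup>2)) (at u)" for k
  proof -
    have "(u - Re (a k))\<^sup>2 + (Im (a k))\<^sup>2 > 0"
      using assms[of k] by (simp add: add_nonneg_pos)
    then show ?thesis
      using assms[of k] by (auto intro!: derivative_eq_intros simp: field_simps power2_eq_square)
  qed
  then show ?thesis
    unfolding arctan_sum_def[abs_def] poisson_sum_def by (rule DERIV_sum)
qed

lemma has_real_derivative_poisson_sum:
  assumes "\<And>k. Im (a k) > 0"
  shows "(poisson_sum a n has_real_derivative poisson_sum_deriv a n u) (at u)"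
proof -
  have "((\<lambda>u. 2 * Im (a k) / ((u - Re (a k))\<^sup>2 + (Im (a k))\<^sup>2)) has_real_derivative
      - 4 * Im (a k) * (u - Re (a k)) / ((u - Re (a k))\<^sup>2 + (Im (a k))\<^sup>2)\<^sup>2) (at u)" for k
  proof -
    have "(u - Re (a k))\<^sup>2 + (Im (a k))\<^sup>2 > 0"
      using assms[of k] by (simp add: add_nonneg_pos)
    then show ?thesis
      by (auto intro!: derivative_eq_intros simp: field_simps power2_eq_square)
  qed
  then show ?thesis
    unfolding poisson_sum_def[abs_def] poisson_sum_deriv_def by (rule DERIV_sum)
qed

lemma continuous_on_poisson_sum_deriv:
  assumes "\<And>k. Im (a k) > 0"
  shows "continuous_on S (poisson_sum_deriv a n)"
proof -
  have "((u - Re (a k))\<^sup>2 + (Im (a k))\<^sup>2)\<^sup>2 \<noteq> 0" for u k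
    using assms[of k] by (simp add: add_nonneg_pos)
  then show ?thesis
    unfolding poisson_sum_deriv_def[abs_def] by (intro continuous_intros) auto
qed

lemma poisson_sum_ge:
  assumes Im_pos: "\<And>k. Im (a k) > 0" and "\<bar>u\<bar> \<le> M"
  shows "sigma_seq a n / (M\<^sup>2 + 1) \<le> poisson_sum a n u"
proof -
  have "\<bar>Im (a k)\<bar> / (1 + (cmod (a k))\<^sup>2) / (M\<^sup>2 + 1)
      \<le> 2 * Im (a k) / ((u - Re (a k))\<^sup>2 + (Im (a k))\<^sup>2)" for k
  proof -
    define \<alpha> b where "\<alpha> = Re (a k)" and "b = Im (a k)"
    have "b > 0"
      using Im_pos[of k] by (simp add: b_def)
    have "u\<^sup>2 \<le> M\<^sup>2"
      using \<open>\<bar>u\<bar> \<le> M\<close> by (metis abs_ge_zero abs_le_square_iff abs_of_nonneg order_trans)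
    moreover have "(u - \<alpha>)\<^sup>2 \<le> 2 * u\<^sup>2 + 2 * \<alpha>\<^sup>2"
      using zero_le_power2[of "u + \<alpha>"] unfolding power2_diff power2_sum by linarith
    moreover have "0 \<le> M\<^sup>2 * \<alpha>\<^sup>2" "0 \<le> M\<^sup>2 * b\<^sup>2" "0 \<le> b\<^sup>2"
      by simp_all
    moreover have "2 * ((1 + (\<alpha>\<^sup>2 + b\<^sup>2)) * (M\<^sup>2 + 1))
        = 2 + 2 * \<alpha>\<^sup>2 + 2 * b\<^sup>2 + 2 * M\<^sup>2 + 2 * (M\<^sup>2 * \<alpha>\<^sup>2) + 2 * (M\<^sup>2 * b\<^sup>2)"
      by (simp add: algebra_simps)
    ultimately have "(u - \<alpha>)\<^sup>2 + b\<^sup>2 \<le> 2 * ((1 + (\<alpha>\<^sup>2 + b\<^sup>2)) * (M\<^sup>2 + 1))"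
      by linarith
    then have "((u - \<alpha>)\<^sup>2 + b\<^sup>2) / 2 \<le> (1 + (\<alpha>\<^sup>2 + b\<^sup>2)) * (M\<^sup>2 + 1)"
      by simp
    moreover have "0 < (1 + (\<alpha>\<^sup>2 + b\<^sup>2)) * (M\<^sup>2 + 1)" "0 < ((u - \<alpha>)\<^sup>2 + b\<^sup>2) / 2"
      using \<open>b > 0\<close> by (simp_all add: add_pos_nonneg add_nonneg_pos)
    ultimately have "b / ((1 + (\<alpha>\<^sup>2 + b\<^sup>2)) * (M\<^sup>2 + 1)) \<le> b / (((u - \<alpha>)\<^sup>2 + b\<^sup>2) / 2)"
      using \<open>b > 0\<close> by (intro divide_left_mono) simp_all
    moreover have "(cmod (a k))\<^sup>2 = \<alpha>\<^sup>2 + b\<^sup>2"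
      by (simp add: cmod_power2 \<alpha>_def b_def)
    ultimately show ?thesis
      using \<open>b > 0\<close> by (simp add: \<alpha>_def b_def mult.commute)
  qed
  then show ?thesis
    unfolding sigma_seq_def poisson_sum_def sum_divide_distrib by (rule sum_mono)
qed

lemma abs_poisson_sum_deriv_le:
  assumes Im_pos: "\<And>k. Im (a k) > 0"
  shows "\<bar>poisson_sum_deriv a n u\<bar> \<le> 2 * varsigma_seq a n"
proof -
  have "\<bar>- 4 * Im (a k) * (u - Re (a k)) / ((u - Re (a k))\<^sup>2 + (Im (a k))\<^sup>2)\<^sup>2\<bar>
      \<le> 2 * (1 / (Im (a k))\<^sup>2)" for k
  proof -
    define t b where "t = u - Re (a k)" and "b = Im (a k)"
    define D where "D = t\<^sup>2 + b\<^sup>2"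
    have "b > 0" "D > 0"
      using Im_pos[of k] by (simp_all add: b_def D_def add_nonneg_pos)
    have "4 * b * \<bar>t\<bar> \<le> 2 * D"
      using sum_squares_bound[of b "\<bar>t\<bar>"] by (simp add: D_def power2_eq_square algebra_simps)
    then have "\<bar>- 4 * b * t / D\<^sup>2\<bar> \<le> 2 * D / D\<^sup>2"
      using \<open>b > 0\<close> by (simp add: abs_divide abs_mult divide_right_mono)
    also have "\<dots> = 2 / D"
      using \<open>D > 0\<close> by (simp add: power2_eq_square)
    also have "\<dots> \<le> 2 / b\<^sup>2"
      using \<open>b > 0\<close> \<open>D > 0\<close> by (intro divide_left_mono) (simp_all add: D_def)
    finally show ?thesis
      by (simp add: t_def b_def D_def)
  qed
  then have "\<bar>poisson_sum_deriv a n u\<bar> \<le> (\<Sum>k<n. 2 * (1 / (Im (a k))\<^sup>2))"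
    unfolding poisson_sum_deriv_def by (intro order_trans[OF sum_abs] sum_mono)
  then show ?thesis
    by (simp add: varsigma_seq_def sum_distrib_left)
qed

lemma mu_seq_eq_arctan_sum:
  assumes Im_pos: "\<And>k. Im (a k) > 0"
  shows "mu_seq a n t x = (arctan_sum a n (x + t) - arctan_sum a n x) / t"
proof -
  have "(LBINT u=x..x+t. poisson_sum a n u) = arctan_sum a n (x + t) - arctan_sum a n x"
  proof (rule interval_integral_FTC_finite)
    show "continuous_on {min x (x + t)..max x (x + t)} (poisson_sum a n)"
      using has_real_derivative_poisson_sum[of a, OF Im_pos]
      by (intro continuous_at_imp_continuous_on ballI DERIV_isCont) blast
    show "(arctan_sum a n has_vector_derivative poisson_sum a n u)
        (at u within {min x (x + t)..max x (x + t)})" for u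
      using has_real_derivative_arctan_sum[of a, OF Im_pos]
      by (simp add: has_real_derivative_iff_has_vector_derivative has_vector_derivative_at_within)
  qed
  then show ?thesis
    by (simp add: mu_seq_def poisson_sum_def[abs_def])
qed

lemma mult_mu_seq_eq_phase:
  assumes Im_pos: "\<And>k. Im (a k) > 0" and "\<bar>s\<bar> = 1" and "y \<noteq> 0"
  shows "y * mu_seq a n (s * y) x = s * (arctan_sum a n (x + s * y) - arctan_sum a n x)"
proof -
  have "inverse s = s"
    using \<open>\<bar>s\<bar> = 1\<close> by (cases "s \<ge> 0") auto
  have "y * mu_seq a n (s * y) x = (arctan_sum a n (x + s * y) - arctan_sum a n x) / s"
    using \<open>y \<noteq> 0\<close> by (simp add: mu_seq_eq_arctan_sum[OF Im_pos])
  also have "\<dots> = s * (arctan_sum a n (x + s * y) - arctan_sum a n x)"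
    using \<open>inverse s = s\<close> by (simp add: divide_inverse mult.commute)
  finally show ?thesis .
qed

lemma has_real_derivative_phase:
  assumes Im_pos: "\<And>k. Im (a k) > 0" and "\<bar>s\<bar> = 1"
  shows "((\<lambda>y. s * (arctan_sum a n (x + s * y) - arctan_sum a n x))
    has_real_derivative poisson_sum a n (x + s * y)) (at y)"
proof -
  have "s * s = 1"
    using \<open>\<bar>s\<bar> = 1\<close> by (metis abs_mult_self_eq mult_1_left)
  have "((\<lambda>y. arctan_sum a n (x + s * y)) has_real_derivative poisson_sum a n (x + s * y) * s) (at y)"
    by (rule DERIV_chain2[OF has_real_derivative_arctan_sum[of a, OF Im_pos]])
      (auto intro!: derivative_eq_intros)
  then have "((\<lambda>y. s * (arctan_sum a n (x + s * y) - arctan_sum a n x))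
      has_real_derivative s * (poisson_sum a n (x + s * y) * s - 0)) (at y)"
    by (intro DERIV_cmult DERIV_diff DERIV_const)
  moreover have "s * (poisson_sum a n (x + s * y) * s - 0) = poisson_sum a n (x + s * y)"
    using \<open>s * s = 1\<close> by (metis diff_zero mult.commute mult.left_commute mult_1_right)
  ultimately show ?thesis
    by metis
qed

lemma varsigma_div_sigma_sq_tendsto_0:
  assumes sigma_inf: "filterlim (sigma_seq a) at_top sequentially"
    and ratio: "\<And>n. n \<ge> 1 \<Longrightarrow> varsigma_seq a n / sigma_seq a n \<le> C"
  shows "(\<lambda>n. varsigma_seq a n / (sigma_seq a n)\<^sup>2) \<longlonglongrightarrow> 0"
proof (rule Lim_null_comparison)
  have "\<forall>\<^sub>F n in sequentially. sigma_seq a n > 0"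
    using sigma_inf by (simp add: filterlim_at_top_dense)
  then show "\<forall>\<^sub>F n in sequentially. norm (varsigma_seq a n / (sigma_seq a n)\<^sup>2) \<le> C / sigma_seq a n"
    using eventually_ge_at_top[of 1]
  proof eventually_elim
    case (elim n)
    have "varsigma_seq a n \<ge> 0"
      by (simp add: varsigma_seq_def sum_nonneg)
    then have "norm (varsigma_seq a n / (sigma_seq a n)\<^sup>2) = varsigma_seq a n / sigma_seq a n / sigma_seq a n"
      by (simp add: power2_eq_square)
    also have "\<dots> \<le> C / sigma_seq a n"
      using elim(1) by (intro divide_right_mono[OF ratio[OF elim(2)]]) simp
    finally show ?case .
  qed
  show "(\<lambda>n. C / sigma_seq a n) \<longlonglongrightarrow> 0"
    by (rule tendsto_divide_0[OF tendsto_const filterlim_at_top_imp_at_infinity[OF sigma_inf]])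
qed

lemma integral_sin_phase_tendsto_0:
  assumes Im_pos: "\<And>k. Im (a k) > 0"
    and sigma_inf: "filterlim (sigma_seq a) at_top sequentially"
    and ratio: "\<And>n. n \<ge> 1 \<Longrightarrow> varsigma_seq a n / sigma_seq a n \<le> C"
    and "\<bar>s\<bar> = 1"
  shows "(\<lambda>n. integral {c..d} (\<lambda>y. sin (s * (arctan_sum a n (x + s * y) - arctan_sum a n x)))) \<longlonglongrightarrow> 0"
proof -
  define M where "M = \<bar>x\<bar> + \<bar>c\<bar> + \<bar>d\<bar>"
  have M: "\<bar>x + s * y\<bar> \<le> M" if "y \<in> {c..d}" for y
    using that \<open>\<bar>s\<bar> = 1\<close> abs_triangle_ineq[of x "s * y"] by (auto simp: M_def abs_mult)
  have "M\<^sup>2 + 1 > 0"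
    by (simp add: add_nonneg_pos)
  show ?thesis
  proof (rule integral_sin_tendsto_0[where L="\<lambda>n. sigma_seq a n / (M\<^sup>2 + 1)"
        and B="\<lambda>n. 2 * varsigma_seq a n"])
    show "((\<lambda>y. poisson_sum a n (x + s * y)) has_real_derivative poisson_sum_deriv a n (x + s * y) * s)
        (at y)" for n y
      by (rule DERIV_chain2[OF has_real_derivative_poisson_sum[of a, OF Im_pos]])
        (auto intro!: derivative_eq_intros)
    show "continuous_on {c..d} (\<lambda>y. poisson_sum_deriv a n (x + s * y) * s)" for n
      by (intro continuous_intros continuous_on_compose2[OF continuous_on_poisson_sum_deriv[OF Im_pos]])
        auto
    show "sigma_seq a n / (M\<^sup>2 + 1) \<le> poisson_sum a n (x + s * y)" if "y \<in> {c..d}" for n y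
      by (rule poisson_sum_ge[OF Im_pos M[OF that]])
    show "\<bar>poisson_sum_deriv a n (x + s * y) * s\<bar> \<le> 2 * varsigma_seq a n" for n y
      using abs_poisson_sum_deriv_le[OF Im_pos] \<open>\<bar>s\<bar> = 1\<close> by (simp add: abs_mult)
    have "filterlim (\<lambda>n. sigma_seq a n * (1 / (M\<^sup>2 + 1))) at_top sequentially"
      using \<open>M\<^sup>2 + 1 > 0\<close> by (intro filterlim_at_top_mult_tendsto_pos[OF tendsto_const _ sigma_inf]) simp
    then show "filterlim (\<lambda>n. sigma_seq a n / (M\<^sup>2 + 1)) at_top sequentially"
      by simp
    have "(\<lambda>n. 2 * varsigma_seq a n / (sigma_seq a n / (M\<^sup>2 + 1))\<^sup>2)
        = (\<lambda>n. 2 * (M\<^sup>2 + 1)\<^sup>2 * (varsigma_seq a n / (sigma_seq a n)\<^sup>2))"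
      by (simp add: power_divide fun_eq_iff)
    then show "(\<lambda>n. 2 * varsigma_seq a n / (sigma_seq a n / (M\<^sup>2 + 1))\<^sup>2) \<longlonglongrightarrow> 0"
      using tendsto_mult_right_zero[OF varsigma_div_sigma_sq_tendsto_0[where C=C, OF sigma_inf ratio]]
      by (simp only:)
    show "((\<lambda>y. s * (arctan_sum a n (x + s * y) - arctan_sum a n x))
        has_real_derivative poisson_sum a n (x + s * y)) (at y)" for n y
      by (rule has_real_derivative_phase[OF Im_pos \<open>\<bar>s\<bar> = 1\<close>])
  qed
qed

lemma set_integral_sin_mu_seq_tendsto_0:
  assumes Im_pos: "\<And>k. Im (a k) > 0"
    and sigma_inf: "filterlim (sigma_seq a) at_top sequentially"
    and ratio: "\<And>n. n \<ge> 1 \<Longrightarrow> varsigma_seq a n / sigma_seq a n \<le> C"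
    and phi_L1: "set_integrable lborel {0<..} \<phi>"
    and "\<bar>s\<bar> = 1"
  shows "(\<lambda>n. LBINT y:{0<..}. \<phi> y * sin (y * mu_seq a n (s * y) x)) \<longlonglongrightarrow> 0"
proof -
  define \<psi> where "\<psi> n y = sin (s * (arctan_sum a n (x + s * y) - arctan_sum a n x))" for n y
  have \<psi>_cont: "continuous_on S (\<psi> n)" for n S
  proof -
    have "continuous_on S (\<lambda>y. s * (arctan_sum a n (x + s * y) - arctan_sum a n x))"
      using has_real_derivative_phase[of a, OF Im_pos \<open>\<bar>s\<bar> = 1\<close>]
      by (meson DERIV_isCont continuous_at_imp_continuous_on)
    then show ?thesis
      unfolding \<psi>_def by (rule continuous_on_sin)
  qed
  interpret bounded_kernel \<psi>
  proof
    show "\<psi> n \<in> borel_measurable borel" for n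
      by (rule borel_measurable_continuous_onI[OF \<psi>_cont])
    show "\<bar>\<psi> n y\<bar> \<le> 1" for n y
      by (simp add: \<psi>_def)
    have "(LBINT y:{c..d}. \<psi> n y) = integral {c..d} (\<psi> n)" for c d n
      by (rule set_borel_integral_eq_integral(2)[OF borel_integrable_atLeastAtMost'[OF \<psi>_cont]])
    then show "(\<lambda>n. LBINT y:{c..d}. \<psi> n y) \<longlonglongrightarrow> 0" for c d
      using integral_sin_phase_tendsto_0[OF Im_pos sigma_inf ratio \<open>\<bar>s\<bar> = 1\<close>]
      by (simp add: \<psi>_def[abs_def])
  qed
  have "(\<lambda>n. LBINT y:{0<..}. \<phi> y * sin (y * mu_seq a n (s * y) x))
      = (\<lambda>n. LINT y|lborel. (indicator {0<..} y * \<phi> y) * \<psi> n y)"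
    unfolding set_lebesgue_integral_def
    using mult_mu_seq_eq_phase[OF Im_pos \<open>\<bar>s\<bar> = 1\<close>]
    by (intro ext Bochner_Integration.integral_cong) (auto simp: \<psi>_def indicator_def)
  moreover have "integrable lborel (\<lambda>y. indicator {0<..} y * \<phi> y)"
    using phi_L1 by (simp add: set_integrable_def)
  ultimately show ?thesis
    by (simp only: integral_mult_kernel_tendsto_0)
qed

theorem lemma7:
  fixes a :: "nat \<Rightarrow> complex" and C :: real
    and \<phi> :: "real \<Rightarrow> real" and x :: real
  assumes Im_pos: "\<And>k. Im (a k) > 0"
    and no_lim: "no_real_limit_points a"
    and sigma_inf: "filterlim (sigma_seq a) at_top sequentially"
    and ratio: "\<And>n. n \<ge> 1 \<Longrightarrow> varsigma_seq a n / sigma_seq a n \<le> C"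
    and phi_L1: "set_integrable lborel {0<..} \<phi>"
  shows "((\<lambda>n. LBINT y:{0<..}. \<phi> y * sin (y * mu_seq a n y x)) \<longlonglongrightarrow> 0) \<and>
        ((\<lambda>n. LBINT y:{0<..}. \<phi> y * sin (y * mu_seq a n (- y) x)) \<longlonglongrightarrow> 0)"
  using set_integral_sin_mu_seq_tendsto_0[OF Im_pos sigma_inf ratio phi_L1, of 1]
    set_integral_sin_mu_seq_tendsto_0[OF Im_pos sigma_inf ratio phi_L1, of "-1"]
  by simp

end
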